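(* Let $n\ge 2$ and $d\ge 2$, and let $|\psi\rangle,|\varphi\rangle\in(\mathbb{C}^d)^{\otimes n}$ be permutation-symmetric states. Suppose there exist invertible $d\times d$ complex matrices $A_1,\ldots,A_n$ such that $$A_1\otimes A_2\otimes\cdots\otimes A_n|\psi\rangle=|\varphi\rangle.$$ Then there exists an invertible $d\times d$ matrix $A$ such that $$A\otimes A\otimes\cdots\otimes A\,|\psi\rangle=|\varphi\rangle$$ ($n$ factors). Moreover, if $A_1,\ldots,A_n$ are all unitary, then $A$ can be chosen unitary.
   Context: A state $|\psi\rangle\in(\mathbb{C}^d)^{\otimes n}$ is permutation-symmetric if $P_\sigma|\psi\rangle=|\psi\rangle$ for every permutation $\sigma$ of $\{1,\ldots,n\}$, where $P_\sigma|i_1 i_2\cdots i_n\rangle=|i_{\sigma(1)}i_{\sigma(2)}\cdots i_{\sigma(n)}\rangle$ on computational basis vectors. *)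

theory Defs
  imports Complex_Main "HOL-Combinatorics.Permutations" "Jordan_Normal_Form.Matrix"
begin

definition idx :: "nat \<Rightarrow> nat \<Rightarrow> nat list set" where
  "idx n d = {xs. length xs = n \<and> set xs \<subseteq> {..<d}}"

(* A vector in (C^d)^{\<otimes> n} is its coefficient function on basis index tuples
   (values outside idx n d are irrelevant). *)

(* P_sigma |i_1...i_n> = |i_sigma(1) ... i_sigma(n)>; psi is permutation-symmetric iff
   P_sigma psi = psi for all sigma; coefficientwise (P_sigma psi)(j) = psi(j o sigma^{-1}). *)
definition perm_apply :: "nat \<Rightarrow> (nat \<Rightarrow> nat) \<Rightarrow> (nat list \<Rightarrow> complex) \<Rightarrow> (nat list \<Rightarrow> complex)" where
  "perm_apply n \<sigma> \<psi> = (\<lambda>xs. \<psi> (map (\<lambda>k. xs ! (inv_into {..<n} \<sigma> k)) [0..<n]))"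

definition perm_symmetric :: "nat \<Rightarrow> nat \<Rightarrow> (nat list \<Rightarrow> complex) \<Rightarrow> bool" where
  "perm_symmetric n d \<psi> \<longleftrightarrow>
     (\<forall>\<sigma>. \<sigma> permutes {..<n} \<longrightarrow> (\<forall>xs\<in>idx n d. perm_apply n \<sigma> \<psi> xs = \<psi> xs))"

(* (A_1 \<otimes> ... \<otimes> A_n) psi, coefficientwise; A k is the (k+1)-th factor. *)
definition tensor_apply :: "nat \<Rightarrow> nat \<Rightarrow> (nat \<Rightarrow> complex mat) \<Rightarrow> (nat list \<Rightarrow> complex) \<Rightarrow> (nat list \<Rightarrow> complex)" where
  "tensor_apply n d A \<psi> = (\<lambda>xs. \<Sum>ys\<in>idx n d. (\<Prod>k<n. A k $$ (xs ! k, ys ! k)) * \<psi> ys)"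

definition conj_transpose :: "complex mat \<Rightarrow> complex mat" where
  "conj_transpose A = mat (dim_col A) (dim_row A) (\<lambda>(i,j). cnj (A $$ (j,i)))"

definition unitary_mat :: "nat \<Rightarrow> complex mat \<Rightarrow> bool" where
  "unitary_mat d U \<longleftrightarrow> U \<in> carrier_mat d d \<and> U * conj_transpose U = 1\<^sub>m d \<and> conj_transpose U * U = 1\<^sub>m d"

end

theory Submission
  imports Defs "Jordan_Normal_Form.Schur_Decomposition" "HOL-Computational_Algebra.Polynomial_Factorial"
    "HOL-Computational_Algebra.Field_as_Ring"
begin

text \<open>Write B_l = A_0^-1 A_l. Since psi and phi = (A_0 x ... x A_(n-1)) psi are symmetric,
  exchanging two tensor factors does not change phi; hence B_l acting in slot l on psi has the
  same effect as B_l acting in slot 0, and B_0 x ... x B_(n-1) acts on psi like the product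
  M = B_0 ... B_(n-1) acting in slot 0. The result (A_0^-1 x ... x A_0^-1) phi is symmetric again,
  so M, and with it every polynomial in M, can be moved to any slot. An invertible complex matrix
  has an n-th root C that is a polynomial in M: Hensel lifting gives a polynomial p with
  p^n = X modulo an annihilating polynomial of M whose roots are nonzero. Then C x ... x C acts on
  psi like C^n = M in slot 0, so A = A_0 C works. If the A_l are unitary, so is M, and the
  polynomial root C is unitary too: C^* commutes with C, so (C^* C)^n = M^* M = 1, which forces
  the positive semidefinite matrix C^* C to be 1.\<close>

section \<open>Polynomial \<open>n\<close>-th roots of \<open>X\<close> modulo a polynomial\<close>

lemma complex_nth_root_exists:
  assumes "(c :: complex) \<noteq> 0" "n > 0"
  shows "\<exists>z. z ^ n = c"
proof -
  have "rcis (root n (cmod c)) (Arg c / n) ^ n = rcis (root n (cmod c) ^ n) (n * (Arg c / n))"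
    by (rule DeMoivre2)
  also have "\<dots> = c" using assms by (simp add: rcis_cmod_Arg)
  finally show ?thesis by blast
qed

lemma linear_factor_mult_dvd:
  fixes q f :: "'a :: idom poly"
  assumes "q dvd f" "[:-a, 1:] dvd f" "poly q a \<noteq> 0"
  shows "[:-a, 1:] * q dvd f"
proof -
  obtain g where g: "f = q * g" using assms(1) by blast
  have "poly f a = 0" using assms(2) by (simp only: poly_eq_0_iff_dvd)
  then have "[:-a, 1:] dvd g" using assms(3) g by (simp add: poly_eq_0_iff_dvd[symmetric])
  then show ?thesis using g by (metis mult.commute mult_dvd_mono dvd_refl)
qed

lemma nth_root_of_X_mod_distinct_roots:
  fixes S :: "complex set"
  assumes "finite S" "0 \<notin> S" "n > 0"
  shows "\<exists>p. (\<Prod>a\<in>S. [:-a, 1:]) dvd p ^ n - [:0, 1:]"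
  using assms
proof (induction S rule: finite_induct)
  case empty then show ?case by simp
next
  case (insert a S)
  define q where "q = (\<Prod>a\<in>S. [:-a, 1:] :: complex poly)"
  obtain p where p: "q dvd p ^ n - [:0, 1:]" using insert.IH insert.prems unfolding q_def by auto
  have qa: "poly q a \<noteq> 0" unfolding q_def using insert by (auto simp: poly_prod)
  have "a \<noteq> 0" using insert.prems by auto
  then obtain z where z: "z ^ n = a" using complex_nth_root_exists insert.prems by blast
  \<comment> \<open>correct \<open>p\<close> by a multiple of \<open>q\<close> so that it takes the value \<open>z\<close> at \<open>a\<close>\<close>
  define p' where "p' = p + [:(z - poly p a) / poly q a:] * q"
  have "q dvd p' - p" unfolding p'_def by (simp add: dvd_smult)
  then have "q dvd p' ^ n - p ^ n"
    unfolding power_diff_sumr2[of p' n p] by (rule dvd_mult2)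
  then have "q dvd (p' ^ n - p ^ n) + (p ^ n - [:0, 1:])" using p by (rule dvd_add)
  then have q_dvd: "q dvd p' ^ n - [:0, 1:]" by (simp add: algebra_simps)
  have "poly p' a = z" unfolding p'_def using qa by simp
  then have "poly (p' ^ n - [:0, 1:]) a = 0" using z by simp
  then have "[:-a, 1:] dvd p' ^ n - [:0, 1:]" by (simp only: poly_eq_0_iff_dvd)
  then have "[:-a, 1:] * q dvd p' ^ n - [:0, 1:]" by (rule linear_factor_mult_dvd[OF q_dvd _ qa])
  then show ?case unfolding q_def using insert by auto
qed

lemma inverse_mod_poly_exists:
  fixes a q :: "complex poly"
  assumes "q \<noteq> 0" and "\<And>z. poly q z = 0 \<Longrightarrow> poly a z \<noteq> 0"
  shows "\<exists>h. q dvd a * h - 1"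
proof -
  define g where "g = gcd a q"
  have "degree g = 0"
  proof (rule ccontr)
    assume "degree g \<noteq> 0"
    then obtain z where "poly g z = 0"
      using fundamental_theorem_of_algebra constant_degree by metis
    moreover have "g dvd q" "g dvd a" unfolding g_def by auto
    ultimately show False using assms(2) by (metis dvd_trans poly_eq_0_iff_dvd)
  qed
  moreover have "g \<noteq> 0" unfolding g_def using assms(1) by simp
  ultimately obtain c where c: "g = [:c:]" "c \<noteq> 0" by (metis degree_0_id pCons_eq_0_iff)
  obtain u v where uv: "u * a + v * q = g"
    using bezout_coefficients_fst_snd[of a q] unfolding g_def by blast
  have "a * smult (1 / c) u - 1 = smult (1 / c) (u * a - g)"
    using c by (simp add: algebra_simps smult_diff_right)
  also have "u * a - g = - (v * q)" using uv by (simp add: algebra_simps)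
  also have "smult (1 / c) (- (v * q)) = q * smult (- 1 / c) v" by (simp add: algebra_simps)
  finally show ?thesis by (metis dvd_triv_left)
qed

lemma power_diff_expansion:
  "\<exists>R. ((a :: 'a :: comm_ring_1) - e) ^ n = a ^ n - of_nat n * a ^ (n - 1) * e + e ^ 2 * R"
proof (induction n)
  case 0 then show ?case by (intro exI[of _ 0]) simp
next
  case (Suc n)
  then obtain R where R: "(a - e) ^ n = a ^ n - of_nat n * a ^ (n - 1) * e + e ^ 2 * R" by blast
  show ?case
  proof (cases n)
    case 0 then show ?thesis by (intro exI[of _ 0]) simp
  next
    case (Suc m)
    have "(a - e) ^ Suc n = (a - e) * (a ^ n - of_nat n * a ^ (n - 1) * e + e ^ 2 * R)"
      using R by simp
    also have "\<dots> = a ^ Suc n - of_nat (Suc n) * a ^ (Suc n - 1) * e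
        + e ^ 2 * (a * R + of_nat n * a ^ m - e * R)"
      using Suc by (simp add: algebra_simps power2_eq_square)
    finally show ?thesis by blast
  qed
qed

text \<open>One Newton (Hensel) step for \<open>p\<^sup>n = X\<close>: the roots of \<open>q\<close> are nonzero, hence
  not roots of the derivative \<open>n p\<^sup>n\<^sup>-\<^sup>1\<close>, which is therefore invertible modulo \<open>q\<close>.\<close>

lemma nth_root_of_X_mod_square:
  fixes q p :: "complex poly"
  assumes q: "q \<noteq> 0" and n: "n > 0" and roots: "\<And>z. poly q z = 0 \<Longrightarrow> z \<noteq> 0"
    and p: "q dvd p ^ n - [:0, 1:]"
  shows "\<exists>p'. q ^ 2 dvd p' ^ n - [:0, 1:]"
proof -
  define g where "g = p ^ n - [:0, 1:]"
  define a where "a = of_nat n * p ^ (n - 1)"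
  have "poly a z \<noteq> 0" if "poly q z = 0" for z
  proof -
    have "poly (p ^ n - [:0, 1:]) z = 0" using p that by (metis dvd_trans poly_eq_0_iff_dvd)
    then have "poly p z ^ n = z" by simp
    then show ?thesis using roots[OF that] n unfolding a_def by (auto simp: of_nat_poly)
  qed
  then obtain h where "q dvd a * h - 1" using inverse_mod_poly_exists[OF q] by blast
  then obtain s where s: "a * h = 1 + q * s" by (metis dvd_def diff_eq_eq add.commute)
  obtain r where r: "g = q * r" using p unfolding g_def by blast
  obtain R where R: "(p - g * h) ^ n = p ^ n - a * (g * h) + (g * h) ^ 2 * R"
    using power_diff_expansion[of p "g * h" n] unfolding a_def by blast
  have "(p - g * h) ^ n - [:0, 1:] = g - g * (a * h) + (g * h) ^ 2 * R"
    using R unfolding g_def by (simp add: algebra_simps)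
  also have "\<dots> = q ^ 2 * (r ^ 2 * h ^ 2 * R - r * s)"
    using r s by (simp add: algebra_simps power2_eq_square)
  finally show ?thesis by (metis dvd_triv_left)
qed

lemma nth_root_of_X_mod_power2:
  fixes q :: "complex poly"
  assumes q: "q \<noteq> 0" and n: "n > 0" and roots: "\<And>z. poly q z = 0 \<Longrightarrow> z \<noteq> 0"
    and p: "q dvd p ^ n - [:0, 1:]"
  shows "\<exists>p. q ^ (2 ^ k) dvd p ^ n - [:0, 1:]"
proof (induction k)
  case 0 then show ?case using p by auto
next
  case (Suc k)
  then obtain p' where p': "q ^ (2 ^ k) dvd p' ^ n - [:0, 1:]" by blast
  have "\<exists>p. (q ^ (2 ^ k)) ^ 2 dvd p ^ n - [:0, 1:]"
    by (intro nth_root_of_X_mod_square[OF _ n _ p']) (use q roots in \<open>auto simp: poly_power\<close>)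
  then show ?case by (simp add: power_mult[symmetric] mult.commute)
qed

lemma prod_list_linear_dvd_power:
  fixes S :: "'a :: idom set"
  assumes "finite S" "set as \<subseteq> S"
  shows "(\<Prod>a\<leftarrow>as. [:-a, 1:]) dvd (\<Prod>a\<in>S. [:-a, 1:]) ^ length as"
  using assms(2)
proof (induction as)
  case Nil then show ?case by simp
next
  case (Cons a as)
  have "[:-a, 1:] dvd (\<Prod>a\<in>S. [:-a, 1:])" using Cons.prems assms(1) by (intro dvd_prodI) auto
  from mult_dvd_mono[OF this Cons.IH] Cons.prems show ?case by simp
qed

lemma nth_root_of_X_mod_prod_linear:
  fixes as :: "complex list"
  assumes "0 \<notin> set as" and "n > 0"
  shows "\<exists>p. (\<Prod>a\<leftarrow>as. [:-a, 1:]) dvd p ^ n - [:0, 1:]"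
proof -
  define q where "q = (\<Prod>a\<in>set as. [:-a, 1:] :: complex poly)"
  have q: "q \<noteq> 0" unfolding q_def by (simp add: prod_zero_iff)
  have roots: "poly q z = 0 \<Longrightarrow> z \<noteq> 0" for z using assms(1) unfolding q_def by (auto simp: poly_prod)
  obtain p where "q dvd p ^ n - [:0, 1:]"
    using nth_root_of_X_mod_distinct_roots[of "set as" n] assms unfolding q_def by auto
  then obtain p' where p': "q ^ (2 ^ length as) dvd p' ^ n - [:0, 1:]"
    using nth_root_of_X_mod_power2[OF q assms(2) roots] by blast
  have "(\<Prod>a\<leftarrow>as. [:-a, 1:]) dvd q ^ length as"
    unfolding q_def by (rule prod_list_linear_dvd_power) auto
  also have "\<dots> dvd q ^ (2 ^ length as)" by (rule le_imp_power_dvd) (simp add: less_imp_le)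
  finally show ?thesis using p' by (meson dvd_trans)
qed

section \<open>Evaluating polynomials at square matrices\<close>

lemma mult_carrier_mat_square [simp]:
  "A \<in> carrier_mat d d \<Longrightarrow> B \<in> carrier_mat d d \<Longrightarrow> A * B \<in> carrier_mat d d"
  by (rule mult_carrier_mat)

lemma smult_one_mat_mult: "A \<in> carrier_mat d e \<Longrightarrow> (a \<cdot>\<^sub>m 1\<^sub>m d) * A = a \<cdot>\<^sub>m (A :: 'a :: comm_ring_1 mat)"
  by (simp add: mult_smult_assoc_mat[of _ d d])

lemma mult_smult_one_mat: "A \<in> carrier_mat e d \<Longrightarrow> A * (a \<cdot>\<^sub>m 1\<^sub>m d) = a \<cdot>\<^sub>m (A :: 'a :: comm_ring_1 mat)"
  using mult_smult_distrib[of A e d "1\<^sub>m d" d a] by simp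

lemma one_smult_mat [simp]: "1 \<cdot>\<^sub>m A = (A :: 'a :: monoid_mult mat)"
  by (rule eq_matI) auto

lemma zero_smult_mat [simp]: "0 \<cdot>\<^sub>m A = 0\<^sub>m (dim_row A) (dim_col (A :: 'a :: mult_zero mat))"
  by (rule eq_matI) auto

definition mat_poly :: "'a :: comm_ring_1 poly \<Rightarrow> 'a mat \<Rightarrow> 'a mat" where
  "mat_poly p M = fold_coeffs (\<lambda>a B. a \<cdot>\<^sub>m 1\<^sub>m (dim_row M) + M * B) p (0\<^sub>m (dim_row M) (dim_row M))"

lemma mat_poly_0 [simp]: "mat_poly 0 M = 0\<^sub>m (dim_row M) (dim_row M)"
  unfolding mat_poly_def by simp

context
  fixes M :: "'a :: comm_ring_1 mat" and d :: nat
  assumes M: "M \<in> carrier_mat d d"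
begin

lemma mat_poly_pCons: "mat_poly (pCons a p) M = a \<cdot>\<^sub>m 1\<^sub>m d + M * mat_poly p M"
proof (cases "a \<noteq> 0 \<or> p \<noteq> 0")
  case True
  then have "fold_coeffs f (pCons a p) = f a \<circ> fold_coeffs f p" for f :: "'a \<Rightarrow> 'a mat \<Rightarrow> 'a mat"
    by (metis fold_coeffs_pCons_coeff_not_0_eq fold_coeffs_pCons_not_0_0_eq)
  then show ?thesis unfolding mat_poly_def using M by simp
qed (use M in \<open>auto simp: mat_poly_def\<close>)

lemma mat_poly_carrier [simp]: "mat_poly p M \<in> carrier_mat d d"
  by (induction p rule: pCons_induct) (use M in \<open>simp_all add: mat_poly_pCons\<close>)

lemma mat_poly_dim [simp]: "dim_row (mat_poly p M) = d" "dim_col (mat_poly p M) = d"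
  using mat_poly_carrier[of p] unfolding carrier_mat_def by auto

lemma mat_poly_const: "mat_poly [:a:] M = a \<cdot>\<^sub>m 1\<^sub>m d"
  using M by (simp add: mat_poly_pCons)

lemma mat_poly_add: "mat_poly (p + q) M = mat_poly p M + mat_poly q M"
proof (induction p arbitrary: q rule: pCons_induct)
  case 0 then show ?case using M by simp
next
  case (pCons a p)
  obtain b q' where q: "q = pCons b q'" by (cases q)
  have "mat_poly (pCons a p + q) M = (a + b) \<cdot>\<^sub>m 1\<^sub>m d + (M * mat_poly p M + M * mat_poly q' M)"
    using pCons q by (simp add: mat_poly_pCons mult_add_distrib_mat[OF M mat_poly_carrier mat_poly_carrier])
  also have "\<dots> = (a \<cdot>\<^sub>m 1\<^sub>m d + M * mat_poly p M) + (b \<cdot>\<^sub>m 1\<^sub>m d + M * mat_poly q' M)"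
    using M by (intro eq_matI) (simp_all add: distrib_right)
  finally show ?case using q by (simp add: mat_poly_pCons)
qed

lemma mat_poly_smult: "mat_poly (smult c p) M = c \<cdot>\<^sub>m mat_poly p M"
proof (induction p rule: pCons_induct)
  case (pCons a p)
  have "mat_poly (smult c (pCons a p)) M = (c * a) \<cdot>\<^sub>m 1\<^sub>m d + c \<cdot>\<^sub>m (M * mat_poly p M)"
    using pCons M by (simp add: mat_poly_pCons mult_smult_distrib[of _ d d _ d])
  also have "\<dots> = c \<cdot>\<^sub>m (a \<cdot>\<^sub>m 1\<^sub>m d + M * mat_poly p M)"
    using M by (intro eq_matI) (simp_all add: distrib_left)
  finally show ?case by (simp add: mat_poly_pCons)
qed (use M in auto)

lemma mat_poly_mult: "mat_poly (p * q) M = mat_poly p M * mat_poly q M"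
proof (induction p rule: pCons_induct)
  case 0 then show ?case using M by (simp add: left_mult_zero_mat[OF mat_poly_carrier])
next
  case (pCons a p)
  let ?P = "mat_poly p M" and ?Q = "mat_poly q M"
  have "mat_poly (pCons a p * q) M = a \<cdot>\<^sub>m ?Q + (0 \<cdot>\<^sub>m 1\<^sub>m d + M * (?P * ?Q))"
    by (simp add: mat_poly_add mat_poly_smult mat_poly_pCons pCons)
  also have "\<dots> = (a \<cdot>\<^sub>m 1\<^sub>m d) * ?Q + (M * ?P) * ?Q"
    using M by (intro eq_matI) (auto simp: smult_one_mat_mult[of _ d d] assoc_mult_mat[of _ d d _ d _ d])
  also have "\<dots> = (a \<cdot>\<^sub>m 1\<^sub>m d + M * ?P) * ?Q"
    by (rule add_mult_distrib_mat[symmetric]) (use M in auto)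
  finally show ?case by (simp add: mat_poly_pCons)
qed

lemma mat_poly_mult_commute: "mat_poly p M * mat_poly q M = mat_poly q M * mat_poly p M"
  by (simp flip: mat_poly_mult add: mult.commute)

lemma mat_poly_X: "mat_poly [:0, 1:] M = M"
  using M by (simp add: mat_poly_pCons mat_poly_const)

lemma mat_poly_power: "mat_poly (p ^ k) M = mat_poly p M ^\<^sub>m k"
proof (induction k)
  case 0 then show ?case using mat_poly_const[of 1] by (simp add: one_pCons)
next
  case (Suc k)
  have "mat_poly (p ^ Suc k) M = mat_poly (p ^ k) M * mat_poly p M"
    by (simp add: mat_poly_mult_commute flip: mat_poly_mult)
  then show ?case using Suc by simp
qed

lemma mat_poly_commute:
  assumes N: "N \<in> carrier_mat d d" and NM: "N * M = M * N"
  shows "N * mat_poly p M = mat_poly p M * N"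
proof (induction p rule: pCons_induct)
  case 0 then show ?case using M N by simp
next
  case (pCons a p)
  let ?P = "mat_poly p M"
  have "N * (a \<cdot>\<^sub>m 1\<^sub>m d + M * ?P) = (a \<cdot>\<^sub>m 1\<^sub>m d) * N + (N * M) * ?P"
    using M N by (simp add: mult_add_distrib_mat[of N d d _ d] smult_one_mat_mult mult_smult_one_mat
        assoc_mult_mat[OF N M mat_poly_carrier])
  also have "(N * M) * ?P = M * (?P * N)"
    using M N pCons by (simp add: NM assoc_mult_mat[of _ d d _ d _ d])
  also have "(a \<cdot>\<^sub>m 1\<^sub>m d) * N + M * (?P * N) = (a \<cdot>\<^sub>m 1\<^sub>m d + M * ?P) * N"
    using M N by (simp add: add_mult_distrib_mat[of _ d d _ _ d] assoc_mult_mat[OF M _ N])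
  finally show ?case by (simp add: mat_poly_pCons)
qed

end

lemma mat_poly_similar:
  assumes T: "T \<in> carrier_mat d d" and P: "P \<in> carrier_mat d d" and Q: "Q \<in> carrier_mat d d"
    and QP: "Q * P = 1\<^sub>m d" and PQ: "P * Q = 1\<^sub>m d"
  shows "mat_poly p (P * T * Q) = P * mat_poly p T * Q"
proof (induction p rule: pCons_induct)
  case 0 then show ?case using T P Q by simp
next
  case (pCons a p)
  let ?R = "mat_poly p T"
  have R: "?R \<in> carrier_mat d d" using T by simp
  have "P * (a \<cdot>\<^sub>m 1\<^sub>m d + T * ?R) * Q = a \<cdot>\<^sub>m (P * Q) + P * (T * ?R) * Q"
    using T P Q R by (simp add: mult_add_distrib_mat[of P d d _ d] add_mult_distrib_mat[of _ d d _ _ d]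
        mult_smult_one_mat mult_smult_assoc_mat[of _ d d _ d])
  also have "P * (T * ?R) * Q = (P * T * Q) * (P * ?R * Q)"
  proof -
    have PTQ: "P * T * Q \<in> carrier_mat d d" using P T Q by simp
    have "(P * T * Q) * (P * ?R * Q) = ((P * T * Q) * P) * (?R * Q)"
      using assoc_mult_mat[OF P R Q] assoc_mult_mat[OF PTQ P, of "?R * Q" d] R Q by simp
    also have "(P * T * Q) * P = P * T"
      using assoc_mult_mat[of "P * T" d d Q d P d] P T Q QP by simp
    also have "(P * T) * (?R * Q) = P * (T * ?R) * Q"
      using assoc_mult_mat[OF P T, of "?R * Q" d] assoc_mult_mat[OF T R Q]
        assoc_mult_mat[OF P, of "T * ?R" d Q d] T R Q by simp
    finally show ?thesis ..
  qed
  finally show ?case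
    using pCons T P Q PQ mat_poly_pCons[of "P * T * Q" d a p] mat_poly_pCons[OF T, of a p] by simp
qed

section \<open>Polynomial \<open>n\<close>-th roots of invertible complex matrices\<close>

lemma mat_poly_linear_index:
  assumes "T \<in> carrier_mat d d" "i < d" "j < d"
  shows "mat_poly [:-e, 1:] T $$ (i, j) = T $$ (i, j) - (if i = j then e else 0)"
  using assms by (simp add: mat_poly_pCons mat_poly_const)

lemma upper_triangular_mat_poly_diag_prefix:
  fixes T :: "'a :: comm_ring_1 mat"
  assumes T: "T \<in> carrier_mat d d" and ut: "upper_triangular T"
  shows "k \<le> d \<Longrightarrow> i < d \<Longrightarrow> j < k \<Longrightarrow>
    mat_poly (\<Prod>e\<leftarrow>take k (diag_mat T). [:-e, 1:]) T $$ (i, j) = 0"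
proof (induction k arbitrary: i j)
  case (Suc k)
  let ?N = "mat_poly (\<Prod>e\<leftarrow>take k (diag_mat T). [:-e, 1:]) T"
  let ?L = "mat_poly [:-T $$ (k, k), 1:] T"
  have "take (Suc k) (diag_mat T) = take k (diag_mat T) @ [T $$ (k, k)]"
    using Suc.prems T by (simp add: take_Suc_conv_app_nth diag_mat_def)
  then have "mat_poly (\<Prod>e\<leftarrow>take (Suc k) (diag_mat T). [:-e, 1:]) T
      = mat_poly ((\<Prod>e\<leftarrow>take k (diag_mat T). [:-e, 1:]) * [:-T $$ (k, k), 1:]) T"
    by (simp only: map_append prod_list.append list.map prod_list.Cons prod_list.Nil mult_1_right)
  also have "\<dots> = ?N * ?L" by (rule mat_poly_mult[OF T])
  also have "(?N * ?L) $$ (i, j) = (\<Sum>l<d. ?N $$ (i, l) * ?L $$ (l, j))"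
    using T Suc.prems by (simp add: scalar_prod_def lessThan_atLeast0)
  also have "\<dots> = 0"
  proof (intro sum.neutral ballI)
    fix l assume l: "l \<in> {..<d}"
    \<comment> \<open>\<open>?N\<close> vanishes in the columns \<open>< k\<close>, column \<open>j \<le> k\<close> of \<open>?L\<close> in the rows \<open>\<ge> k\<close>\<close>
    show "?N $$ (i, l) * ?L $$ (l, j) = 0"
    proof (cases "l < k")
      case True then show ?thesis using Suc by simp
    next
      case False
      then have "?L $$ (l, j) = 0"
        using l Suc.prems ut T mat_poly_linear_index[OF T, of l j]
        unfolding upper_triangular_def by (auto simp: less_Suc_eq)
      then show ?thesis by simp
    qed
  qed
  finally show ?case .
qed simp

lemma upper_triangular_mat_poly_diag:
  assumes "T \<in> carrier_mat d d" "upper_triangular T"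
  shows "mat_poly (\<Prod>e\<leftarrow>diag_mat T. [:-e, 1:]) T = 0\<^sub>m d d"
proof -
  have "take d (diag_mat T) = diag_mat T" using assms(1) by (simp add: diag_mat_def)
  then show ?thesis
    using upper_triangular_mat_poly_diag_prefix[OF assms, of d] assms(1) by (intro eq_matI) auto
qed

lemma invertible_mat_inverse:
  assumes "(A :: 'a :: semiring_1 mat) \<in> carrier_mat d d" "invertible_mat A"
  obtains B where "B \<in> carrier_mat d d" "A * B = 1\<^sub>m d" "B * A = 1\<^sub>m d"
proof -
  obtain B where AB: "A * B = 1\<^sub>m (dim_row A)" and BA: "B * A = 1\<^sub>m (dim_row B)"
    using assms(2) unfolding invertible_mat_def inverts_mat_def by blast
  then have "B \<in> carrier_mat d d"
    using assms(1) by (metis carrier_matD carrier_matI index_mult_mat(2,3) index_one_mat(2,3))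
  then show thesis using that AB BA assms(1) by auto
qed

lemma invertible_mat_iff_det:
  assumes "(A :: 'a :: field mat) \<in> carrier_mat d d"
  shows "invertible_mat A \<longleftrightarrow> det A \<noteq> 0"
proof
  assume "invertible_mat A"
  then obtain B where B: "B \<in> carrier_mat d d" and AB: "A * B = 1\<^sub>m d"
    using assms invertible_mat_inverse by blast
  have "det A * det B = 1" using det_mult[OF assms B] AB by simp
  then show "det A \<noteq> 0" by auto
next
  assume "det A \<noteq> 0"
  then have "A \<in> Units (ring_mat TYPE('a) d ())" by (rule det_non_zero_imp_unit[OF assms])
  then obtain B where "B \<in> carrier_mat d d" "B * A = 1\<^sub>m d" "A * B = 1\<^sub>m d"
    unfolding Units_def ring_mat_def by auto
  then show "invertible_mat A"
    using assms unfolding invertible_mat_def inverts_mat_def by (auto simp: square_mat.simps)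
qed

lemma invertible_mat_annihilating_poly:
  fixes M :: "complex mat"
  assumes M: "M \<in> carrier_mat d d" and "invertible_mat M"
  obtains es where "0 \<notin> set es" "mat_poly (\<Prod>e\<leftarrow>es. [:-e, 1:]) M = 0\<^sub>m d d"
proof -
  obtain es where "char_poly M = (\<Prod>e\<leftarrow>es. [:-e, 1:])" using char_poly_factorized[OF M] by blast
  moreover obtain T P Q where "schur_decomposition M es = (T, P, Q)" by (metis prod_cases3)
  ultimately have sim: "similar_mat_wit M T P Q" and ut: "upper_triangular T" and es: "diag_mat T = es"
    using schur_decomposition[OF M] by blast+
  have C: "T \<in> carrier_mat d d" "P \<in> carrier_mat d d" "Q \<in> carrier_mat d d"
    and PQ: "P * Q = 1\<^sub>m d" "Q * P = 1\<^sub>m d" and MT: "M = P * T * Q"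
    using sim M unfolding similar_mat_wit_def Let_def by auto
  have "mat_poly (\<Prod>e\<leftarrow>es. [:-e, 1:]) M = P * 0\<^sub>m d d * Q"
    using mat_poly_similar[OF C PQ(2,1)] upper_triangular_mat_poly_diag[OF C(1) ut] MT es by simp
  also have "\<dots> = 0\<^sub>m d d" using C by simp
  finally have "mat_poly (\<Prod>e\<leftarrow>es. [:-e, 1:]) M = 0\<^sub>m d d" .
  moreover have "det M = det T" using det_similar sim unfolding similar_mat_def by blast
  then have "prod_list es = det M" using det_upper_triangular[OF ut C(1)] es by simp
  then have "0 \<notin> set es" using assms invertible_mat_iff_det[OF M] by (metis prod_list_zero_iff)
  ultimately show thesis using that by blast
qed

lemma invertible_mat_poly_nth_root:
  fixes M :: "complex mat"
  assumes M: "M \<in> carrier_mat d d" and "invertible_mat M" and "n > 0"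
  obtains p where "mat_poly p M ^\<^sub>m n = M"
proof -
  obtain es where es: "0 \<notin> set es" and ann: "mat_poly (\<Prod>e\<leftarrow>es. [:-e, 1:]) M = 0\<^sub>m d d"
    using invertible_mat_annihilating_poly[OF assms(1,2)] by blast
  obtain p r where "p ^ n - [:0, 1:] = (\<Prod>e\<leftarrow>es. [:-e, 1:]) * r"
    using nth_root_of_X_mod_prod_linear[OF es assms(3)] by (auto elim!: dvdE)
  then have "p ^ n = [:0, 1:] + (\<Prod>e\<leftarrow>es. [:-e, 1:]) * r" by (simp add: algebra_simps)
  then have "mat_poly p M ^\<^sub>m n = M + 0\<^sub>m d d * mat_poly r M"
    using M by (simp add: mat_poly_add mat_poly_mult mat_poly_X ann flip: mat_poly_power)
  also have "\<dots> = M" using M by simp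
  finally show thesis by (rule that)
qed

section \<open>Tensor products of matrices acting on coefficient functions\<close>

lemma idx_0: "idx 0 d = {[]}"
  unfolding idx_def by auto

lemma idx_Suc: "idx (Suc n) d = (\<lambda>(y, ys). y # ys) ` ({..<d} \<times> idx n d)"
  unfolding idx_def by (auto simp: length_Suc_conv image_iff)

lemma finite_idx [simp]: "finite (idx n d)"
  by (induction n) (simp_all add: idx_0 idx_Suc)

lemma idx_length: "xs \<in> idx n d \<Longrightarrow> length xs = n"
  unfolding idx_def by simp

lemma idx_nth_less: "xs \<in> idx n d \<Longrightarrow> k < n \<Longrightarrow> xs ! k < d"
  unfolding idx_def using nth_mem by fastforce

lemma idx_iff_nth: "xs \<in> idx n d \<longleftrightarrow> length xs = n \<and> (\<forall>k<n. xs ! k < d)"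
  unfolding idx_def by (fastforce simp: in_set_conv_nth subset_iff)

lemma sum_idx_prod:
  "(\<Sum>ys\<in>idx n d. \<Prod>k<n. f k (ys ! k)) = (\<Prod>k<n. \<Sum>y<d. f k y :: 'a :: comm_semiring_1)"
proof (induction n arbitrary: f)
  case 0 then show ?case by (simp add: idx_0)
next
  case (Suc n)
  have inj: "inj_on (\<lambda>(y, ys). y # ys) ({..<d} \<times> idx n d)" by (auto simp: inj_on_def)
  have "(\<Sum>ys\<in>idx (Suc n) d. \<Prod>k<Suc n. f k (ys ! k))
      = (\<Sum>(y, ys)\<in>{..<d} \<times> idx n d. f 0 y * (\<Prod>k<n. f (Suc k) (ys ! k)))"
    unfolding idx_Suc sum.reindex[OF inj]
    by (intro sum.cong) (auto simp: prod.lessThan_Suc_shift simp del: prod.lessThan_Suc)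
  also have "\<dots> = (\<Sum>y<d. f 0 y) * (\<Sum>ys\<in>idx n d. \<Prod>k<n. f (Suc k) (ys ! k))"
    by (simp add: sum_product sum.cartesian_product case_prod_unfold)
  also have "\<dots> = (\<Sum>y<d. f 0 y) * (\<Prod>k<n. \<Sum>y<d. f (Suc k) y)"
    using Suc.IH[of "\<lambda>k. f (Suc k)"] by simp
  finally show ?case by (simp only: prod.lessThan_Suc_shift)
qed

lemma tensor_apply_cong:
  assumes "\<And>k. k < n \<Longrightarrow> A k = B k" and "\<And>ys. ys \<in> idx n d \<Longrightarrow> \<psi> ys = \<chi> ys"
  shows "tensor_apply n d A \<psi> xs = tensor_apply n d B \<chi> xs"
  unfolding tensor_apply_def using assms by (intro sum.cong arg_cong2[where f = "(*)"] prod.cong) auto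

lemma tensor_apply_mult:
  assumes A: "\<And>k. k < n \<Longrightarrow> A k \<in> carrier_mat d d" and B: "\<And>k. k < n \<Longrightarrow> B k \<in> carrier_mat d d"
    and xs: "xs \<in> idx n d"
  shows "tensor_apply n d A (tensor_apply n d B \<psi>) xs = tensor_apply n d (\<lambda>k. A k * B k) \<psi> xs"
proof -
  have entry: "(\<Sum>y<d. A k $$ (xs ! k, y) * B k $$ (y, zs ! k)) = (A k * B k) $$ (xs ! k, zs ! k)"
    if "zs \<in> idx n d" "k < n" for zs k
    using A[of k] B[of k] that xs idx_nth_less by (simp add: scalar_prod_def lessThan_atLeast0)
  have "tensor_apply n d A (tensor_apply n d B \<psi>) xs
      = (\<Sum>zs\<in>idx n d. \<Sum>ys\<in>idx n d. (\<Prod>k<n. A k $$ (xs ! k, ys ! k) * B k $$ (ys ! k, zs ! k)) * \<psi> zs)"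
    unfolding tensor_apply_def sum_distrib_left
    by (subst sum.swap) (simp add: prod.distrib mult.assoc)
  also have "\<dots> = (\<Sum>zs\<in>idx n d. (\<Sum>ys\<in>idx n d. \<Prod>k<n. A k $$ (xs ! k, ys ! k) * B k $$ (ys ! k, zs ! k)) * \<psi> zs)"
    by (simp only: sum_distrib_right)
  also have "\<dots> = (\<Sum>zs\<in>idx n d. (\<Prod>k<n. \<Sum>y<d. A k $$ (xs ! k, y) * B k $$ (y, zs ! k)) * \<psi> zs)"
    by (intro sum.cong refl arg_cong2[where f = "(*)"]) (rule sum_idx_prod)
  also have "\<dots> = (\<Sum>zs\<in>idx n d. (\<Prod>k<n. (A k * B k) $$ (xs ! k, zs ! k)) * \<psi> zs)"
    by (intro sum.cong refl arg_cong2[where f = "(*)"] prod.cong) (auto simp: entry)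
  finally show ?thesis unfolding tensor_apply_def .
qed

lemma prod_one_mat_idx:
  assumes "xs \<in> idx n d" "ys \<in> idx n d"
  shows "(\<Prod>k<n. 1\<^sub>m d $$ (xs ! k, ys ! k) :: 'a :: comm_semiring_1) = (if xs = ys then 1 else 0)"
proof (cases "xs = ys")
  case True then show ?thesis using assms(1) idx_nth_less by simp
next
  case False
  then obtain k where k: "k < n" "xs ! k \<noteq> ys ! k"
    using assms idx_length nth_equalityI by metis
  then have "1\<^sub>m d $$ (xs ! k, ys ! k) = (0 :: 'a)" using assms idx_nth_less by simp
  then show ?thesis using False k by (auto intro: prod_zero)
qed

lemma tensor_apply_one:
  assumes "\<And>k. k < n \<Longrightarrow> A k = 1\<^sub>m d" and xs: "xs \<in> idx n d"
  shows "tensor_apply n d A \<psi> xs = \<psi> xs"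
proof -
  have A: "(\<Prod>k<n. A k $$ (xs ! k, ys ! k)) = (\<Prod>k<n. 1\<^sub>m d $$ (xs ! k, ys ! k))" for ys
    using assms(1) by (intro prod.cong) auto
  have "tensor_apply n d A \<psi> xs = (\<Sum>ys\<in>idx n d. (if xs = ys then 1 else 0) * \<psi> ys)"
    unfolding tensor_apply_def by (intro sum.cong refl) (simp only: A prod_one_mat_idx[OF xs])
  also have "\<dots> = (\<Sum>ys\<in>idx n d. if xs = ys then \<psi> ys else 0)" by (intro sum.cong) auto
  also have "\<dots> = \<psi> xs" using xs by (simp add: sum.delta)
  finally show ?thesis .
qed

section \<open>Permuting the tensor factors\<close>

definition permute_idx :: "nat \<Rightarrow> (nat \<Rightarrow> nat) \<Rightarrow> nat list \<Rightarrow> nat list" where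
  "permute_idx n \<tau> xs = map (\<lambda>k. xs ! \<tau> k) [0..<n]"

definition perm_invariant :: "nat \<Rightarrow> nat \<Rightarrow> (nat list \<Rightarrow> 'a) \<Rightarrow> bool" where
  "perm_invariant n d \<chi> \<longleftrightarrow>
     (\<forall>\<tau>. \<tau> permutes {..<n} \<longrightarrow> (\<forall>xs\<in>idx n d. \<chi> (permute_idx n \<tau> xs) = \<chi> xs))"

lemma permute_idx_nth: "k < n \<Longrightarrow> permute_idx n \<tau> xs ! k = xs ! \<tau> k"
  unfolding permute_idx_def by simp

lemma permute_idx_idx:
  assumes "\<tau> permutes {..<n}" "xs \<in> idx n d"
  shows "permute_idx n \<tau> xs \<in> idx n d"
  using assms permutes_in_image[OF assms(1)]
  by (auto simp: idx_iff_nth permute_idx_nth permute_idx_def)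

lemma permute_idx_inv:
  assumes "\<tau> permutes {..<n}" "length xs = n"
  shows "permute_idx n (inv_into UNIV \<tau>) (permute_idx n \<tau> xs) = xs"
  using assms permutes_in_image[OF permutes_inv[OF assms(1)]]
  by (intro nth_equalityI) (auto simp: permute_idx_nth permutes_inverses(1)[OF assms(1)] permute_idx_def)

lemma perm_symmetric_imp_perm_invariant:
  assumes "perm_symmetric n d \<psi>"
  shows "perm_invariant n d \<psi>"
  unfolding perm_invariant_def
proof (intro allI impI ballI)
  fix \<tau> xs assume \<tau>: "\<tau> permutes {..<n}" and xs: "xs \<in> idx n d"
  have "inv_into {..<n} (inv_into UNIV \<tau>) k = \<tau> k" if "k < n" for k
    using that \<tau> permutes_inj_on[OF permutes_inv[OF \<tau>]] permutes_in_image[OF \<tau>]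
    by (intro inv_into_f_eq) (auto simp: permutes_inj[OF \<tau>])
  then have "perm_apply n (inv_into UNIV \<tau>) \<psi> xs = \<psi> (permute_idx n \<tau> xs)"
    unfolding perm_apply_def permute_idx_def by (intro arg_cong[where f = \<psi>]) auto
  then show "\<psi> (permute_idx n \<tau> xs) = \<psi> xs"
    using assms permutes_inv[OF \<tau>] xs unfolding perm_symmetric_def by metis
qed

lemma perm_invariant_cong:
  assumes "perm_invariant n d \<chi>" "\<And>xs. xs \<in> idx n d \<Longrightarrow> \<chi>' xs = \<chi> xs"
  shows "perm_invariant n d \<chi>'"
  using assms permute_idx_idx unfolding perm_invariant_def by metis

lemma tensor_apply_permute_idx:
  assumes \<tau>: "\<tau> permutes {..<n}" and xs: "xs \<in> idx n d"
  shows "tensor_apply n d (\<lambda>k. A (\<tau> k)) \<psi> (permute_idx n \<tau> xs)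
    = tensor_apply n d A (\<lambda>ys. \<psi> (permute_idx n \<tau> ys)) xs"
proof -
  have "(\<Prod>k<n. A (\<tau> k) $$ (permute_idx n \<tau> xs ! k, permute_idx n \<tau> zs ! k))
      = (\<Prod>k<n. A k $$ (xs ! k, zs ! k))" for zs
    using \<tau> permutes_in_image[OF \<tau>] permutes_in_image[OF permutes_inv[OF \<tau>]]
    by (intro prod.reindex_bij_witness[of _ "inv_into UNIV \<tau>" \<tau>])
       (auto simp: permute_idx_nth permutes_inverses[OF \<tau>])
  moreover have "tensor_apply n d (\<lambda>k. A (\<tau> k)) \<psi> (permute_idx n \<tau> xs) = (\<Sum>zs\<in>idx n d.
      (\<Prod>k<n. A (\<tau> k) $$ (permute_idx n \<tau> xs ! k, permute_idx n \<tau> zs ! k)) * \<psi> (permute_idx n \<tau> zs))"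
  proof -
    have \<tau>': "inv_into UNIV \<tau> permutes {..<n}" by (rule permutes_inv[OF \<tau>])
    have "permute_idx n \<tau> (permute_idx n (inv_into UNIV \<tau>) ys) = ys" if "ys \<in> idx n d" for ys
      using permute_idx_inv[OF \<tau>' idx_length[OF that]] permutes_inv_inv[OF \<tau>] by simp
    moreover have "permute_idx n (inv_into UNIV \<tau>) (permute_idx n \<tau> zs) = zs" if "zs \<in> idx n d" for zs
      using permute_idx_inv[OF \<tau> idx_length[OF that]] .
    ultimately show ?thesis
      unfolding tensor_apply_def using permute_idx_idx[OF \<tau>] permute_idx_idx[OF \<tau>']
      by (intro sum.reindex_bij_witness[of _ "permute_idx n \<tau>" "permute_idx n (inv_into UNIV \<tau>)"]) auto
  qed
  ultimately show ?thesis unfolding tensor_apply_def by simp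
qed

lemma perm_invariant_tensor_apply_const:
  assumes "perm_invariant n d \<phi>"
  shows "perm_invariant n d (tensor_apply n d (\<lambda>_. C) \<phi>)"
  unfolding perm_invariant_def
proof (intro allI impI ballI)
  fix \<tau> xs assume \<tau>: "\<tau> permutes {..<n}" and xs: "xs \<in> idx n d"
  show "tensor_apply n d (\<lambda>_. C) \<phi> (permute_idx n \<tau> xs) = tensor_apply n d (\<lambda>_. C) \<phi> xs"
    using tensor_apply_permute_idx[OF \<tau> xs, of "\<lambda>_. C"] assms \<tau>
    unfolding perm_invariant_def by (auto intro: tensor_apply_cong)
qed

lemma tensor_apply_permute_factors:
  assumes \<psi>: "perm_invariant n d \<psi>" and A\<psi>: "perm_invariant n d (tensor_apply n d (\<lambda>k. A (\<tau> k)) \<psi>)"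
    and \<tau>: "\<tau> permutes {..<n}" and xs: "xs \<in> idx n d"
  shows "tensor_apply n d A \<psi> xs = tensor_apply n d (\<lambda>k. A (\<tau> k)) \<psi> xs"
proof -
  have "tensor_apply n d A \<psi> xs = tensor_apply n d A (\<lambda>ys. \<psi> (permute_idx n \<tau> ys)) xs"
    using \<psi> \<tau> unfolding perm_invariant_def by (intro tensor_apply_cong) auto
  also have "\<dots> = tensor_apply n d (\<lambda>k. A (\<tau> k)) \<psi> (permute_idx n \<tau> xs)"
    by (rule tensor_apply_permute_idx[OF \<tau> xs, symmetric])
  also have "\<dots> = tensor_apply n d (\<lambda>k. A (\<tau> k)) \<psi> xs"
    using A\<psi> \<tau> xs unfolding perm_invariant_def by metis
  finally show ?thesis .
qed

section \<open>Matrices acting on a single tensor factor\<close>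

definition at_slot :: "nat \<Rightarrow> nat \<Rightarrow> 'a :: {zero, one} mat \<Rightarrow> nat \<Rightarrow> 'a mat" where
  "at_slot d j X = (\<lambda>k. if k = j then X else 1\<^sub>m d)"

definition slot_movable :: "nat \<Rightarrow> nat \<Rightarrow> (nat list \<Rightarrow> complex) \<Rightarrow> complex mat \<Rightarrow> bool" where
  "slot_movable n d \<psi> X \<longleftrightarrow>
     (\<forall>j<n. \<forall>xs\<in>idx n d. tensor_apply n d (at_slot d j X) \<psi> xs = tensor_apply n d (at_slot d 0 X) \<psi> xs)"

fun prod_mat_upt :: "nat \<Rightarrow> (nat \<Rightarrow> 'a :: semiring_1 mat) \<Rightarrow> nat \<Rightarrow> 'a mat" where
  "prod_mat_upt d B 0 = 1\<^sub>m d"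
| "prod_mat_upt d B (Suc m) = prod_mat_upt d B m * B m"

lemma prod_mat_upt_carrier:
  "(\<And>l. l < m \<Longrightarrow> B l \<in> carrier_mat d d) \<Longrightarrow> prod_mat_upt d B m \<in> carrier_mat d d"
  by (induction m) auto

lemma prod_mat_upt_const: "C \<in> carrier_mat d d \<Longrightarrow> prod_mat_upt d (\<lambda>_. C) m = C ^\<^sub>m m"
  by (induction m) auto

lemma at_slot_carrier: "X \<in> carrier_mat d d \<Longrightarrow> at_slot d j X k \<in> carrier_mat d d"
  unfolding at_slot_def by auto

lemma prod_at_slot:
  assumes "j < n"
  shows "(\<Prod>k<n. at_slot d j X k $$ (xs ! k, ys ! k))
    = X $$ (xs ! j, ys ! j) * (\<Prod>k\<in>{..<n} - {j}. 1\<^sub>m d $$ (xs ! k, ys ! k))"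
  using assms by (subst prod.remove[of _ j]) (auto simp: at_slot_def intro!: prod.cong)

lemma tensor_apply_at_slot_linear:
  assumes "j < n" "X \<in> carrier_mat d d" "Y \<in> carrier_mat d d" "xs \<in> idx n d"
  shows "tensor_apply n d (at_slot d j (a \<cdot>\<^sub>m X + Y)) \<psi> xs
    = a * tensor_apply n d (at_slot d j X) \<psi> xs + tensor_apply n d (at_slot d j Y) \<psi> xs"
proof -
  have "(\<Prod>k<n. at_slot d j (a \<cdot>\<^sub>m X + Y) k $$ (xs ! k, ys ! k)) =
        a * (\<Prod>k<n. at_slot d j X k $$ (xs ! k, ys ! k)) + (\<Prod>k<n. at_slot d j Y k $$ (xs ! k, ys ! k))"
    if "ys \<in> idx n d" for ys
    using assms that idx_nth_less unfolding prod_at_slot[OF assms(1)] by (simp add: algebra_simps)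
  then show ?thesis
    unfolding tensor_apply_def sum_distrib_left
    by (simp add: sum.distrib algebra_simps cong: sum.cong)
qed

lemma tensor_apply_at_slot_zero:
  assumes "j < n" "xs \<in> idx n d"
  shows "tensor_apply n d (at_slot d j (0\<^sub>m d d)) \<psi> xs = 0"
  using assms idx_nth_less unfolding tensor_apply_def prod_at_slot[OF assms(1)] by simp

lemma tensor_apply_at_slot_one: "xs \<in> idx n d \<Longrightarrow> tensor_apply n d (at_slot d j (1\<^sub>m d)) \<psi> xs = \<psi> xs"
  by (rule tensor_apply_one) (simp_all add: at_slot_def)

lemma tensor_apply_at_slot_mult:
  assumes "X \<in> carrier_mat d d" "Y \<in> carrier_mat d d" "xs \<in> idx n d"
  shows "tensor_apply n d (at_slot d j X) (tensor_apply n d (at_slot d j Y) \<psi>) xs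
    = tensor_apply n d (at_slot d j (X * Y)) \<psi> xs"
proof -
  have "tensor_apply n d (at_slot d j X) (tensor_apply n d (at_slot d j Y) \<psi>) xs
      = tensor_apply n d (\<lambda>k. at_slot d j X k * at_slot d j Y k) \<psi> xs"
    using assms by (intro tensor_apply_mult) (auto simp: at_slot_carrier)
  also have "\<dots> = tensor_apply n d (at_slot d j (X * Y)) \<psi> xs"
    by (intro tensor_apply_cong) (auto simp: at_slot_def)
  finally show ?thesis .
qed

lemma tensor_apply_at_slot_commute:
  assumes "X \<in> carrier_mat d d" "Y \<in> carrier_mat d d" "xs \<in> idx n d"
    and "i = j \<Longrightarrow> X * Y = Y * X"
  shows "tensor_apply n d (at_slot d i X) (tensor_apply n d (at_slot d j Y) \<psi>) xs
    = tensor_apply n d (at_slot d j Y) (tensor_apply n d (at_slot d i X) \<psi>) xs"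
proof -
  have "tensor_apply n d (at_slot d i X) (tensor_apply n d (at_slot d j Y) \<psi>) xs
      = tensor_apply n d (\<lambda>k. at_slot d i X k * at_slot d j Y k) \<psi> xs"
    using assms by (intro tensor_apply_mult) (auto simp: at_slot_carrier)
  also have "\<dots> = tensor_apply n d (\<lambda>k. at_slot d j Y k * at_slot d i X k) \<psi> xs"
    using assms by (intro tensor_apply_cong) (auto simp: at_slot_def)
  also have "\<dots> = tensor_apply n d (at_slot d j Y) (tensor_apply n d (at_slot d i X) \<psi>) xs"
    using assms by (intro tensor_apply_mult[symmetric]) (auto simp: at_slot_carrier)
  finally show ?thesis .
qed

lemma slot_movable_mult:
  assumes X: "X \<in> carrier_mat d d" and Y: "Y \<in> carrier_mat d d" and XY: "X * Y = Y * X"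
    and "slot_movable n d \<psi> X" "slot_movable n d \<psi> Y"
  shows "slot_movable n d \<psi> (X * Y)"
  unfolding slot_movable_def
proof (intro allI impI ballI)
  fix j xs assume j: "j < n" and xs: "xs \<in> idx n d"
  have move: "tensor_apply n d (at_slot d j Z) \<psi> ys = tensor_apply n d (at_slot d 0 Z) \<psi> ys"
    if "slot_movable n d \<psi> Z" "ys \<in> idx n d" for Z ys
    using that j unfolding slot_movable_def by blast
  have "tensor_apply n d (at_slot d j (X * Y)) \<psi> xs
      = tensor_apply n d (at_slot d j X) (tensor_apply n d (at_slot d j Y) \<psi>) xs"
    using X Y xs by (simp add: tensor_apply_at_slot_mult)
  also have "\<dots> = tensor_apply n d (at_slot d j X) (tensor_apply n d (at_slot d 0 Y) \<psi>) xs"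
    by (rule tensor_apply_cong) (use assms(5) in \<open>auto simp: move\<close>)
  also have "\<dots> = tensor_apply n d (at_slot d 0 Y) (tensor_apply n d (at_slot d j X) \<psi>) xs"
    using X Y xs XY by (intro tensor_apply_at_slot_commute) auto
  also have "\<dots> = tensor_apply n d (at_slot d 0 Y) (tensor_apply n d (at_slot d 0 X) \<psi>) xs"
    by (rule tensor_apply_cong) (use assms(4) in \<open>auto simp: move\<close>)
  also have "\<dots> = tensor_apply n d (at_slot d 0 (X * Y)) \<psi> xs"
    using X Y xs XY by (simp add: tensor_apply_at_slot_mult)
  finally show "tensor_apply n d (at_slot d j (X * Y)) \<psi> xs = tensor_apply n d (at_slot d 0 (X * Y)) \<psi> xs" .
qed

lemma slot_movable_mat_poly:
  assumes M: "M \<in> carrier_mat d d" and "slot_movable n d \<psi> M"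
  shows "slot_movable n d \<psi> (mat_poly p M)"
proof (induction p rule: pCons_induct)
  case 0
  have "mat_poly 0 M = 0\<^sub>m d d" using M by simp
  then show ?case
    unfolding slot_movable_def using tensor_apply_at_slot_zero
    by (metis gr_zeroI not_less_zero)
next
  case (pCons a p)
  have "M * mat_poly p M = mat_poly p M * M" using mat_poly_commute[OF M M refl] .
  then have MP: "slot_movable n d \<psi> (M * mat_poly p M)"
    using M assms(2) pCons.IH by (intro slot_movable_mult) simp_all
  let ?MP = "M * mat_poly p M"
  have MP_carrier: "?MP \<in> carrier_mat d d" using M by simp
  show ?case
    unfolding slot_movable_def mat_poly_pCons[OF M]
  proof (intro allI impI ballI)
    fix j xs assume j: "j < n" and xs: "xs \<in> idx n d"
    have "tensor_apply n d (at_slot d j (a \<cdot>\<^sub>m 1\<^sub>m d + ?MP)) \<psi> xs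
        = a * tensor_apply n d (at_slot d j (1\<^sub>m d)) \<psi> xs + tensor_apply n d (at_slot d j ?MP) \<psi> xs"
      using j xs MP_carrier by (intro tensor_apply_at_slot_linear) auto
    also have "\<dots> = a * tensor_apply n d (at_slot d 0 (1\<^sub>m d)) \<psi> xs + tensor_apply n d (at_slot d 0 ?MP) \<psi> xs"
      using MP j xs tensor_apply_at_slot_one[OF xs] unfolding slot_movable_def by metis
    also have "\<dots> = tensor_apply n d (at_slot d 0 (a \<cdot>\<^sub>m 1\<^sub>m d + ?MP)) \<psi> xs"
      using j xs MP_carrier by (intro tensor_apply_at_slot_linear[symmetric]) auto
    finally show "tensor_apply n d (at_slot d j (a \<cdot>\<^sub>m 1\<^sub>m d + ?MP)) \<psi> xs
        = tensor_apply n d (at_slot d 0 (a \<cdot>\<^sub>m 1\<^sub>m d + ?MP)) \<psi> xs" .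
  qed
qed

lemma tensor_apply_collapse:
  assumes B: "\<And>l. l < n \<Longrightarrow> B l \<in> carrier_mat d d"
    and move: "\<And>l xs. l < n \<Longrightarrow> xs \<in> idx n d \<Longrightarrow>
      tensor_apply n d (at_slot d l (B l)) \<psi> xs = tensor_apply n d (at_slot d 0 (B l)) \<psi> xs"
  shows "m \<le> n \<Longrightarrow> xs \<in> idx n d \<Longrightarrow>
    tensor_apply n d (\<lambda>l. if l < m then B l else 1\<^sub>m d) \<psi> xs
      = tensor_apply n d (at_slot d 0 (prod_mat_upt d B m)) \<psi> xs"
proof (induction m arbitrary: xs)
  case 0 then show ?case by (simp add: tensor_apply_one tensor_apply_at_slot_one)
next
  case (Suc m)
  let ?P = "prod_mat_upt d B m"
  have m: "m < n" and P: "?P \<in> carrier_mat d d" using Suc.prems B by (auto intro: prod_mat_upt_carrier)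
  have "tensor_apply n d (\<lambda>l. if l < Suc m then B l else 1\<^sub>m d) \<psi> xs
      = tensor_apply n d (\<lambda>l. at_slot d m (B m) l * (if l < m then B l else 1\<^sub>m d)) \<psi> xs"
  proof (rule tensor_apply_cong)
    fix l assume "l < n"
    then have "dim_row (B l) = d" "dim_col (B l) = d" using B by auto
    then show "(if l < Suc m then B l else 1\<^sub>m d) = at_slot d m (B m) l * (if l < m then B l else 1\<^sub>m d)"
      unfolding at_slot_def by (cases "l < m"; cases "l = m") auto
  qed simp
  also have "\<dots> = tensor_apply n d (at_slot d m (B m)) (tensor_apply n d (\<lambda>l. if l < m then B l else 1\<^sub>m d) \<psi>) xs"
    using B m Suc.prems by (intro tensor_apply_mult[symmetric]) (auto simp: at_slot_carrier)
  also have "\<dots> = tensor_apply n d (at_slot d m (B m)) (tensor_apply n d (at_slot d 0 ?P) \<psi>) xs"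
    by (rule tensor_apply_cong) (use Suc in auto)
  also have "\<dots> = tensor_apply n d (at_slot d 0 ?P) (tensor_apply n d (at_slot d m (B m)) \<psi>) xs"
    \<comment> \<open>for \<open>m = 0\<close> the two factors sit in the same slot, but then \<open>?P\<close> is the identity\<close>
    using B[OF m] P Suc.prems by (intro tensor_apply_at_slot_commute) auto
  also have "\<dots> = tensor_apply n d (at_slot d 0 ?P) (tensor_apply n d (at_slot d 0 (B m)) \<psi>) xs"
    by (rule tensor_apply_cong) (use m move in auto)
  also have "\<dots> = tensor_apply n d (at_slot d 0 (?P * B m)) \<psi> xs"
    using B m P Suc.prems by (intro tensor_apply_at_slot_mult) auto
  finally show ?case by simp
qed

lemma tensor_apply_const_movable:
  assumes C: "C \<in> carrier_mat d d" and "slot_movable n d \<psi> C" and xs: "xs \<in> idx n d"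
  shows "tensor_apply n d (\<lambda>_. C) \<psi> xs = tensor_apply n d (at_slot d 0 (C ^\<^sub>m n)) \<psi> xs"
proof -
  have move: "\<And>l ys. l < n \<Longrightarrow> ys \<in> idx n d \<Longrightarrow>
      tensor_apply n d (at_slot d l C) \<psi> ys = tensor_apply n d (at_slot d 0 C) \<psi> ys"
    using assms(2) unfolding slot_movable_def by blast
  have "tensor_apply n d (\<lambda>_. C) \<psi> xs = tensor_apply n d (\<lambda>l. if l < n then C else 1\<^sub>m d) \<psi> xs"
    by (rule tensor_apply_cong) auto
  also have "\<dots> = tensor_apply n d (at_slot d 0 (prod_mat_upt d (\<lambda>_. C) n)) \<psi> xs"
    using tensor_apply_collapse[of n "\<lambda>_. C" d \<psi> n xs] C move xs by blast
  finally show ?thesis unfolding prod_mat_upt_const[OF C] .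
qed

lemma slot_movable_if_perm_invariant:
  assumes "perm_invariant n d \<psi>" "perm_invariant n d (tensor_apply n d (at_slot d 0 X) \<psi>)"
  shows "slot_movable n d \<psi> X"
  unfolding slot_movable_def
proof (intro allI impI ballI)
  fix j xs assume j: "j < n" and xs: "xs \<in> idx n d"
  let ?\<tau> = "Transposition.transpose 0 j"
  have \<tau>: "?\<tau> permutes {..<n}" using j by (intro permutes_swap_id) auto
  have slot: "at_slot d j X (?\<tau> k) = at_slot d 0 X k" for k
    by (auto simp: at_slot_def transpose_def)
  show "tensor_apply n d (at_slot d j X) \<psi> xs = tensor_apply n d (at_slot d 0 X) \<psi> xs"
    using tensor_apply_permute_factors[OF assms(1) _ \<tau> xs, of "at_slot d j X"] assms(2)
    unfolding slot by simp
qed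

section \<open>Conjugate transposes and unitary matrices\<close>

lemma conj_transpose_carrier [simp]: "A \<in> carrier_mat m n \<Longrightarrow> conj_transpose A \<in> carrier_mat n m"
  unfolding conj_transpose_def by auto

lemma conj_transpose_dim [simp]:
  "dim_row (conj_transpose A) = dim_col A" "dim_col (conj_transpose A) = dim_row A"
  unfolding conj_transpose_def by auto

lemma conj_transpose_index [simp]:
  "i < dim_col A \<Longrightarrow> j < dim_row A \<Longrightarrow> conj_transpose A $$ (i, j) = cnj (A $$ (j, i))"
  unfolding conj_transpose_def by auto

lemma conj_transpose_conj_transpose [simp]: "conj_transpose (conj_transpose A) = A"
  by (intro eq_matI) auto

lemma conj_transpose_one [simp]: "conj_transpose (1\<^sub>m d) = 1\<^sub>m d"
  by (intro eq_matI) auto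

lemma conj_transpose_mult:
  "A \<in> carrier_mat m n \<Longrightarrow> B \<in> carrier_mat n k \<Longrightarrow>
    conj_transpose (A * B) = conj_transpose B * conj_transpose A"
  by (intro eq_matI) (auto simp: scalar_prod_def mult.commute)

lemma pow_mat_commute:
  assumes A: "A \<in> carrier_mat d d" and B: "B \<in> carrier_mat d d" and AB: "A * B = B * (A :: 'a :: semiring_1 mat)"
  shows "A * B ^\<^sub>m k = B ^\<^sub>m k * A"
proof (induction k)
  case (Suc k)
  have Bk: "B ^\<^sub>m k \<in> carrier_mat d d" using B by simp
  have "A * B ^\<^sub>m Suc k = (A * B ^\<^sub>m k) * B" using A B Bk by (simp add: assoc_mult_mat[of _ d d _ d _ d])
  also have "\<dots> = B ^\<^sub>m k * (A * B)" using Suc A B Bk by (simp add: assoc_mult_mat[of _ d d _ d _ d])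
  also have "\<dots> = B ^\<^sub>m Suc k * A" using A B Bk AB by (simp add: assoc_mult_mat[of _ d d _ d _ d])
  finally show ?case .
qed (use A B in simp)

lemma pow_mat_mult_commute:
  assumes A: "A \<in> carrier_mat d d" and B: "B \<in> carrier_mat d d" and AB: "A * B = B * (A :: 'a :: semiring_1 mat)"
  shows "(A * B) ^\<^sub>m k = A ^\<^sub>m k * B ^\<^sub>m k"
proof (induction k)
  case (Suc k)
  have Ak: "A ^\<^sub>m k \<in> carrier_mat d d" and Bk: "B ^\<^sub>m k \<in> carrier_mat d d" using A B by auto
  have "(A * B) ^\<^sub>m Suc k = A ^\<^sub>m k * (B ^\<^sub>m k * A) * B"
    using Suc A B Ak Bk by (simp add: assoc_mult_mat[of _ d d _ d _ d])
  also have "B ^\<^sub>m k * A = A * B ^\<^sub>m k" using pow_mat_commute[OF A B AB] by simp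
  finally show ?case using A B Ak Bk by (simp add: assoc_mult_mat[of _ d d _ d _ d])
qed (use A B in simp)

lemma conj_transpose_pow:
  assumes A: "A \<in> carrier_mat d d"
  shows "conj_transpose (A ^\<^sub>m k) = conj_transpose A ^\<^sub>m k"
proof (induction k)
  case (Suc k)
  have "conj_transpose (A ^\<^sub>m Suc k) = conj_transpose A * conj_transpose A ^\<^sub>m k"
    using A Suc by (simp add: conj_transpose_mult[of _ d d _ d])
  then show ?case using pow_mat_commute[of "conj_transpose A" d "conj_transpose A" k] A by simp
qed (use A in simp)

lemma unitary_mat_mult:
  assumes U: "unitary_mat d U" and V: "unitary_mat d V"
  shows "unitary_mat d (U * V)"
proof -
  have UC: "U \<in> carrier_mat d d" and VC: "V \<in> carrier_mat d d" using U V unfolding unitary_mat_def by auto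
  have "U * V * conj_transpose (U * V) = U * (V * conj_transpose V) * conj_transpose U"
    and "conj_transpose (U * V) * (U * V) = conj_transpose V * (conj_transpose U * U) * V"
    using UC VC by (simp_all add: conj_transpose_mult[OF UC VC] assoc_mult_mat[of _ d d _ d _ d])
  then show ?thesis using U V UC VC unfolding unitary_mat_def by simp
qed

lemma unitary_mat_conj_transpose: "unitary_mat d U \<Longrightarrow> unitary_mat d (conj_transpose U)"
  unfolding unitary_mat_def by auto

lemma unitary_mat_one: "unitary_mat d (1\<^sub>m d)"
  unfolding unitary_mat_def by simp

lemma unitary_mat_invertible: "unitary_mat d U \<Longrightarrow> invertible_mat U"
  unfolding unitary_mat_def invertible_mat_def inverts_mat_def
  by (auto simp: square_mat.simps intro!: exI[of _ "conj_transpose U"])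

definition mat_trace :: "'a :: comm_ring_1 mat \<Rightarrow> 'a" where
  "mat_trace A = (\<Sum>i<dim_row A. A $$ (i, i))"

definition frobenius_sq :: "complex mat \<Rightarrow> real" where
  "frobenius_sq A = (\<Sum>i<dim_row A. \<Sum>j<dim_col A. (cmod (A $$ (i, j)))\<^sup>2)"

lemma mat_trace_mult_conj_transpose:
  assumes "A \<in> carrier_mat d d"
  shows "mat_trace (A * conj_transpose A) = of_real (frobenius_sq A)"
proof -
  have "mat_trace (A * conj_transpose A) = (\<Sum>i<d. \<Sum>j<d. A $$ (i, j) * cnj (A $$ (i, j)))"
    unfolding mat_trace_def using assms
    by (intro sum.cong refl) (auto simp: scalar_prod_def lessThan_atLeast0)
  also have "\<dots> = (\<Sum>i<d. \<Sum>j<d. of_real ((cmod (A $$ (i, j)))\<^sup>2))"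
    by (simp only: complex_norm_square)
  finally show ?thesis unfolding frobenius_sq_def using assms by simp
qed

lemma frobenius_sq_nonneg: "frobenius_sq A \<ge> 0"
  unfolding frobenius_sq_def by (intro sum_nonneg) auto

lemma frobenius_sq_eq_0:
  assumes "A \<in> carrier_mat d d" "frobenius_sq A = 0"
  shows "A = 0\<^sub>m d d"
proof (rule eq_matI)
  fix i j assume "i < dim_row (0\<^sub>m d d :: complex mat)" "j < dim_col (0\<^sub>m d d :: complex mat)"
  moreover have "\<forall>i<d. \<forall>j<d. (cmod (A $$ (i, j)))\<^sup>2 = 0"
    using assms unfolding frobenius_sq_def by (simp add: sum_nonneg_eq_0_iff sum_nonneg)
  ultimately show "A $$ (i, j) = 0\<^sub>m d d $$ (i, j)" by simp
qed (use assms in auto)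

lemma mat_trace_sandwich_mat_poly_sum:
  fixes m :: nat
  assumes "H \<in> carrier_mat d d" "K \<in> carrier_mat d d" "K' \<in> carrier_mat d d"
  shows "mat_trace (K * mat_poly (\<Sum>j<m. f j) H * K') = (\<Sum>j<m. mat_trace (K * mat_poly (f j) H * K'))"
proof (induction m)
  case 0 then show ?case using assms by (simp add: mat_trace_def)
next
  case (Suc m)
  let ?P = "mat_poly (\<Sum>j<m. f j) H" and ?Q = "mat_poly (f m) H"
  have "K * mat_poly (\<Sum>j<Suc m. f j) H * K' = K * ?P * K' + K * ?Q * K'"
    using assms by (simp add: mat_poly_add mult_add_distrib_mat[of _ d d _ d] add_mult_distrib_mat[of _ d d _ _ d])
  then show ?case using Suc assms by (simp add: mat_trace_def sum.distrib)
qed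

text \<open>Every \<open>K (C\<^sup>* C)\<^sup>j K\<^sup>*\<close> is a Gram matrix: split the power in half, putting the middle
  factor \<open>C\<^sup>* C\<close> for odd \<open>j\<close> on both sides.\<close>

lemma sandwich_power_gram:
  assumes C: "C \<in> carrier_mat d d" and K: "K \<in> carrier_mat d d"
  obtains Z where "Z \<in> carrier_mat d d"
    "K * (conj_transpose C * C) ^\<^sub>m j * conj_transpose K = Z * conj_transpose Z"
proof -
  define H where "H = conj_transpose C * C"
  define G where "G = H ^\<^sub>m (j div 2)"
  have HC: "H \<in> carrier_mat d d" and GC: "G \<in> carrier_mat d d" unfolding H_def G_def using C by auto
  have "conj_transpose H = H" unfolding H_def using C by (simp add: conj_transpose_mult[of _ d d _ d])
  then have Gh: "conj_transpose G = G" unfolding G_def using HC by (simp add: conj_transpose_pow)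
  have HH: "H ^\<^sub>m (a + b) = H ^\<^sub>m a * H ^\<^sub>m b" for a b
    using HC by (induction b) (auto simp: assoc_mult_mat[of _ d d _ d _ d])
  show thesis
  proof (cases "even j")
    case True
    then have "j = j div 2 + j div 2" by presburger
    then have "H ^\<^sub>m j = G * G" unfolding G_def by (metis HH)
    then have "K * H ^\<^sub>m j * conj_transpose K = (K * G) * conj_transpose (K * G)"
      using K GC Gh by (simp add: conj_transpose_mult[of _ d d _ d] assoc_mult_mat[of _ d d _ d _ d])
    then show thesis using that[of "K * G"] K GC unfolding H_def by simp
  next
    case False
    then have "j = Suc (j div 2) + j div 2" by presburger
    then have "H ^\<^sub>m j = G * H * G" unfolding G_def by (metis HH pow_mat.simps(2))
    then have "H ^\<^sub>m j = G * conj_transpose C * C * G"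
      unfolding H_def using GC C by (simp add: assoc_mult_mat[of _ d d _ d _ d])
    then have "K * H ^\<^sub>m j * conj_transpose K = (K * G * conj_transpose C) * conj_transpose (K * G * conj_transpose C)"
      using K GC Gh C by (simp add: conj_transpose_mult[of _ d d _ d] assoc_mult_mat[of _ d d _ d _ d])
    then show thesis using that[of "K * G * conj_transpose C"] K GC C unfolding H_def by simp
  qed
qed

lemma conj_transpose_mult_self_eq_one:
  assumes C: "C \<in> carrier_mat d d" and n: "n > 0" and Hn: "(conj_transpose C * C) ^\<^sub>m n = 1\<^sub>m d"
  shows "conj_transpose C * C = 1\<^sub>m d"
proof -
  define H where "H = conj_transpose C * C"
  define K where "K = mat_poly [:-1, 1:] H"
  have HC: "H \<in> carrier_mat d d" and KC: "K \<in> carrier_mat d d" unfolding H_def K_def using C by auto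
  have "[:-1, 1:] = [:0, 1 :: complex:] - 1" by (simp add: one_pCons)
  then have "[:-1, 1:] * (\<Sum>j<n. [:0, 1:] ^ j) = [:0, 1 :: complex:] ^ n - 1"
    by (simp only: power_diff_1_eq)
  then have "[:-1, 1:] * (\<Sum>j<n. [:0, 1:] ^ j) = [:0, 1:] ^ n + [:- 1 :: complex:]"
    by (simp add: one_pCons)
  then have "K * mat_poly (\<Sum>j<n. [:0, 1:] ^ j) H = H ^\<^sub>m n + (-1) \<cdot>\<^sub>m 1\<^sub>m d"
    unfolding K_def using HC by (simp add: mat_poly_add mat_poly_power mat_poly_X mat_poly_const flip: mat_poly_mult)
  also have "\<dots> = 0\<^sub>m d d" unfolding H_def Hn by (intro eq_matI) auto
  finally have "(\<Sum>j<n. mat_trace (K * mat_poly ([:0, 1:] ^ j) H * conj_transpose K)) = 0"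
    using mat_trace_sandwich_mat_poly_sum[OF HC KC conj_transpose_carrier[OF KC],
        where m = n and f = "\<lambda>j. [:0, 1:] ^ j"] KC
    by (simp add: mat_trace_def)
  moreover have "\<forall>j. \<exists>Z. Z \<in> carrier_mat d d \<and> K * H ^\<^sub>m j * conj_transpose K = Z * conj_transpose Z"
    using sandwich_power_gram[OF C KC] unfolding H_def by metis
  then obtain Z where Z: "\<And>j. Z j \<in> carrier_mat d d"
    "\<And>j. K * H ^\<^sub>m j * conj_transpose K = Z j * conj_transpose (Z j)"
    by metis
  ultimately have "of_real (\<Sum>j<n. frobenius_sq (Z j)) = (0 :: complex)"
    using HC by (simp add: mat_poly_power mat_poly_X mat_trace_mult_conj_transpose[OF Z(1)] of_real_sum)
  then have "(\<Sum>j<n. frobenius_sq (Z j)) = 0" by (simp only: of_real_eq_0_iff)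
  then have "frobenius_sq (Z 0) = 0" using n by (simp add: sum_nonneg_eq_0_iff frobenius_sq_nonneg)
  moreover have "K * conj_transpose K = Z 0 * conj_transpose (Z 0)" using Z(2)[of 0] HC KC by simp
  ultimately have "frobenius_sq K = 0"
    using mat_trace_mult_conj_transpose[OF Z(1), of 0] mat_trace_mult_conj_transpose[OF KC] by simp
  then have "K = 0\<^sub>m d d" by (rule frobenius_sq_eq_0[OF KC])
  then show ?thesis
    unfolding H_def[symmetric] using HC mat_poly_linear_index[OF HC, of _ _ 1]
    by (intro eq_matI) (auto simp: K_def dest!: arg_cong[where f = "\<lambda>A. A $$ _"])
qed

lemma unitary_mat_poly_root:
  assumes U: "unitary_mat d M" and n: "n > 0" and root: "mat_poly p M ^\<^sub>m n = M"
  shows "unitary_mat d (mat_poly p M)"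
proof -
  have M: "M \<in> carrier_mat d d" and MM: "M * conj_transpose M = 1\<^sub>m d" "conj_transpose M * M = 1\<^sub>m d"
    using U unfolding unitary_mat_def by auto
  define C where "C = mat_poly p M"
  let ?C' = "conj_transpose C" and ?M' = "conj_transpose M"
  have CC: "C \<in> carrier_mat d d" unfolding C_def using M by simp
  have "M * C = C * M" unfolding C_def by (rule mat_poly_commute[OF M M refl])
  then have MC': "?M' * ?C' = ?C' * ?M'" by (metis conj_transpose_mult[OF M CC] conj_transpose_mult[OF CC M])
  \<comment> \<open>\<open>C\<^sup>*\<close> commutes with \<open>M\<^sup>* = M\<^sup>-\<^sup>1\<close>, hence with \<open>M\<close> and with the polynomial \<open>C\<close> in \<open>M\<close>\<close>
  have C'C: "?C' \<in> carrier_mat d d" and M'C: "?M' \<in> carrier_mat d d" using CC M by auto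
  have "?C' * M = (M * ?M') * (?C' * M)" using MM C'C M by (simp add: left_mult_one_mat[of _ d d])
  also have "\<dots> = M * ((?M' * ?C') * M)" using M M'C C'C by (simp add: assoc_mult_mat[of _ d d _ d _ d])
  also have "\<dots> = M * (?C' * (?M' * M))"
    unfolding MC' using M M'C C'C by (simp add: assoc_mult_mat[of _ d d _ d _ d])
  finally have "?C' * M = M * ?C'" using MM C'C by (simp add: right_mult_one_mat[of _ d d])
  then have comm: "?C' * C = C * ?C'" using mat_poly_commute[OF M C'C] unfolding C_def by blast
  have "(?C' * C) ^\<^sub>m n = conj_transpose (C ^\<^sub>m n) * C ^\<^sub>m n"
    using pow_mat_mult_commute[OF _ CC comm] CC by (simp add: conj_transpose_pow)
  then have "(?C' * C) ^\<^sub>m n = 1\<^sub>m d" using root MM unfolding C_def by simp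
  then have "?C' * C = 1\<^sub>m d" by (rule conj_transpose_mult_self_eq_one[OF CC n])
  then show ?thesis using comm CC unfolding unitary_mat_def C_def by simp
qed

section \<open>Equivalent symmetric states are related by a symmetric operator\<close>

lemma invertible_mat_mult:
  assumes "(A :: 'a :: field mat) \<in> carrier_mat d d" "B \<in> carrier_mat d d" "invertible_mat A" "invertible_mat B"
  shows "invertible_mat (A * B)"
  using assms det_mult[OF assms(1,2)] by (simp add: invertible_mat_iff_det[of _ d])

lemma invertible_mat_pow_root:
  assumes C: "(C :: 'a :: field mat) \<in> carrier_mat d d" and "invertible_mat (C ^\<^sub>m n)" and "n > 0"
  shows "invertible_mat C"
proof -
  have "det (C ^\<^sub>m n) = det C ^ n" using C by (induction n) (simp_all add: det_mult[of _ d])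
  then show ?thesis using assms invertible_mat_iff_det[OF C] invertible_mat_iff_det[of "C ^\<^sub>m n" d] by auto
qed

lemma prod_mat_upt_invertible:
  "(\<And>l. l < m \<Longrightarrow> B l \<in> carrier_mat d d \<and> invertible_mat (B l)) \<Longrightarrow>
    invertible_mat (prod_mat_upt d B m :: 'a :: field mat)"
proof (induction m)
  case 0 then show ?case by (simp add: invertible_mat_iff_det[of _ d])
next
  case (Suc m) then show ?case by (auto intro!: invertible_mat_mult prod_mat_upt_carrier)
qed

lemma prod_mat_upt_unitary:
  "(\<And>l. l < m \<Longrightarrow> unitary_mat d (B l)) \<Longrightarrow> unitary_mat d (prod_mat_upt d B m)"
  by (induction m) (auto intro: unitary_mat_mult simp: unitary_mat_one)

text \<open>Write \<open>B\<^sub>0 A\<^sub>k\<close> in slot \<open>k\<close> as \<open>W\<close> applied after \<open>A\<close>, where \<open>W\<close> has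
  \<open>B\<^sub>0\<close> in slot \<open>k\<close> and \<open>B\<^sub>l\<close> in each other slot \<open>l\<close>. By symmetry, exchanging \<open>A\<^sub>0\<close> and
  \<open>A\<^sub>k\<close> does not change the image of \<open>\<psi>\<close> under \<open>A\<close>, and after the exchange \<open>W\<close> cancels
  every factor except \<open>B\<^sub>0 A\<^sub>k\<close>, now in slot \<open>0\<close>.\<close>

lemma tensor_apply_move_normalized_factor:
  assumes \<psi>: "perm_invariant n d \<psi>" and A\<psi>: "perm_invariant n d (tensor_apply n d A \<psi>)"
    and A: "\<And>l. l < n \<Longrightarrow> A l \<in> carrier_mat d d"
    and B: "\<And>l. l < n \<Longrightarrow> B l \<in> carrier_mat d d" "\<And>l. l < n \<Longrightarrow> B l * A l = 1\<^sub>m d"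
    and k: "k < n" and xs: "xs \<in> idx n d"
  shows "tensor_apply n d (at_slot d k (B 0 * A k)) \<psi> xs = tensor_apply n d (at_slot d 0 (B 0 * A k)) \<psi> xs"
proof (cases "k = 0")
  case False
  let ?\<tau> = "Transposition.transpose 0 k"
  have \<tau>: "?\<tau> permutes {..<n}" using k by (intro permutes_swap_id) auto
  have n: "0 < n" using k by simp
  define W where "W l = (if l = k then B 0 else B l)" for l
  have W: "W l \<in> carrier_mat d d" if "l < n" for l unfolding W_def using B(1) n that by simp
  have "tensor_apply n d (at_slot d k (B 0 * A k)) \<psi> xs = tensor_apply n d (\<lambda>l. W l * A l) \<psi> xs"
    by (rule tensor_apply_cong) (auto simp: at_slot_def W_def B(2))
  also have "\<dots> = tensor_apply n d W (tensor_apply n d A \<psi>) xs"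
    by (rule tensor_apply_mult[symmetric, OF W A xs])
  also have "\<dots> = tensor_apply n d W (tensor_apply n d (\<lambda>l. A (?\<tau> l)) \<psi>) xs"
  proof (rule tensor_apply_cong)
    fix ys assume ys: "ys \<in> idx n d"
    have "tensor_apply n d A \<psi> ys = tensor_apply n d (\<lambda>l. A (?\<tau> (?\<tau> l))) \<psi> ys" by simp
    then show "tensor_apply n d A \<psi> ys = tensor_apply n d (\<lambda>l. A (?\<tau> l)) \<psi> ys"
      using tensor_apply_permute_factors[OF \<psi> _ \<tau> ys, of "\<lambda>l. A (?\<tau> l)"] A\<psi> by simp
  qed simp
  also have "\<dots> = tensor_apply n d (\<lambda>l. W l * A (?\<tau> l)) \<psi> xs"
    using permutes_in_image[OF \<tau>] by (intro tensor_apply_mult[OF W _ xs]) (auto intro: A)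
  also have "\<dots> = tensor_apply n d (at_slot d 0 (B 0 * A k)) \<psi> xs"
    using False B(2) n by (intro tensor_apply_cong) (auto simp: at_slot_def W_def transpose_def)
  finally show ?thesis .
qed simp

lemma tensor_apply_normalized_product:
  assumes \<psi>: "perm_invariant n d \<psi>" and \<phi>: "perm_invariant n d \<phi>"
    and A: "\<And>l. l < n \<Longrightarrow> A l \<in> carrier_mat d d"
    and B: "\<And>l. l < n \<Longrightarrow> B l \<in> carrier_mat d d" "\<And>l. l < n \<Longrightarrow> B l * A l = 1\<^sub>m d"
    and A\<psi>: "\<forall>xs\<in>idx n d. tensor_apply n d A \<psi> xs = \<phi> xs"
    and xs: "xs \<in> idx n d" and n: "0 < n"
  shows "tensor_apply n d (at_slot d 0 (prod_mat_upt d (\<lambda>l. B 0 * A l) n)) \<psi> xs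
    = tensor_apply n d (\<lambda>_. B 0) \<phi> xs"
proof -
  have BA: "B 0 * A l \<in> carrier_mat d d" if "l < n" for l using A B(1) n that by simp
  have A\<psi>': "perm_invariant n d (tensor_apply n d A \<psi>)" using perm_invariant_cong[OF \<phi>] A\<psi> by simp
  have "tensor_apply n d (at_slot d 0 (prod_mat_upt d (\<lambda>l. B 0 * A l) n)) \<psi> xs
      = tensor_apply n d (\<lambda>l. if l < n then B 0 * A l else 1\<^sub>m d) \<psi> xs"
    using BA xs tensor_apply_move_normalized_factor[OF \<psi> A\<psi>' A B]
    by (intro tensor_apply_collapse[where B = "\<lambda>l. B 0 * A l", symmetric]) auto
  also have "\<dots> = tensor_apply n d (\<lambda>l. B 0 * A l) \<psi> xs"
    by (rule tensor_apply_cong) auto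
  also have "\<dots> = tensor_apply n d (\<lambda>_. B 0) (tensor_apply n d A \<psi>) xs"
    using A B(1) n xs by (intro tensor_apply_mult[symmetric]) auto
  also have "\<dots> = tensor_apply n d (\<lambda>_. B 0) \<phi> xs" by (rule tensor_apply_cong) (use A\<psi> in auto)
  finally show ?thesis .
qed

lemma tensor_apply_const_factor:
  assumes \<psi>: "perm_invariant n d \<psi>" and \<phi>: "perm_invariant n d \<phi>"
    and A: "\<And>l. l < n \<Longrightarrow> A l \<in> carrier_mat d d"
    and B: "\<And>l. l < n \<Longrightarrow> B l \<in> carrier_mat d d" "\<And>l. l < n \<Longrightarrow> B l * A l = 1\<^sub>m d"
    and AB: "A 0 * B 0 = 1\<^sub>m d"
    and A\<psi>: "\<forall>xs\<in>idx n d. tensor_apply n d A \<psi> xs = \<phi> xs"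
    and M: "M = prod_mat_upt d (\<lambda>l. B 0 * A l) n"
    and root: "mat_poly p M ^\<^sub>m n = M"
    and xs: "xs \<in> idx n d" and n: "0 < n"
  shows "tensor_apply n d (\<lambda>_. A 0 * mat_poly p M) \<psi> xs = \<phi> xs"
proof -
  have MC: "M \<in> carrier_mat d d" unfolding M using A B(1) n by (intro prod_mat_upt_carrier) simp
  have M\<psi>: "tensor_apply n d (at_slot d 0 M) \<psi> ys = tensor_apply n d (\<lambda>_. B 0) \<phi> ys"
    if "ys \<in> idx n d" for ys
    unfolding M using A B by (intro tensor_apply_normalized_product[OF \<psi> \<phi> _ _ _ A\<psi> that n]) auto
  \<comment> \<open>\<open>M\<close> in slot \<open>0\<close> yields the symmetric state \<open>(A\<^sub>0\<^sup>-\<^sup>1)\<^sup>\<otimes>\<^sup>n \<phi>\<close>, so \<open>M\<close> can be moved to any slot\<close>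
  have "slot_movable n d \<psi> M"
    using perm_invariant_cong[OF perm_invariant_tensor_apply_const[OF \<phi>]] M\<psi>
    by (intro slot_movable_if_perm_invariant[OF \<psi>]) blast
  then have "slot_movable n d \<psi> (mat_poly p M)" by (rule slot_movable_mat_poly[OF MC])
  then have C\<psi>: "tensor_apply n d (\<lambda>_. mat_poly p M) \<psi> ys = tensor_apply n d (\<lambda>_. B 0) \<phi> ys"
    if "ys \<in> idx n d" for ys
    using tensor_apply_const_movable[OF mat_poly_carrier[OF MC] _ that] root M\<psi>[OF that] by simp
  have "tensor_apply n d (\<lambda>_. A 0 * mat_poly p M) \<psi> xs
      = tensor_apply n d (\<lambda>_. A 0) (tensor_apply n d (\<lambda>_. mat_poly p M) \<psi>) xs"
    using A n MC xs by (intro tensor_apply_mult[symmetric]) auto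
  also have "\<dots> = tensor_apply n d (\<lambda>_. A 0) (tensor_apply n d (\<lambda>_. B 0) \<phi>) xs"
    by (rule tensor_apply_cong) (simp_all add: C\<psi>)
  also have "\<dots> = tensor_apply n d (\<lambda>_. A 0 * B 0) \<phi> xs"
    using A B(1) n xs by (intro tensor_apply_mult) auto
  also have "\<dots> = \<phi> xs" using AB xs by (simp add: tensor_apply_one)
  finally show ?thesis .
qed

lemma tensor_apply_const_factor_exists:
  assumes \<psi>: "perm_invariant n d \<psi>" and \<phi>: "perm_invariant n d \<phi>"
    and A: "\<And>l. l < n \<Longrightarrow> A l \<in> carrier_mat d d"
    and B: "\<And>l. l < n \<Longrightarrow> B l \<in> carrier_mat d d" "\<And>l. l < n \<Longrightarrow> B l * A l = 1\<^sub>m d"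
    and AB: "A 0 * B 0 = 1\<^sub>m d"
    and A\<psi>: "\<forall>xs\<in>idx n d. tensor_apply n d A \<psi> xs = \<phi> xs" and n: "0 < n"
  defines "M \<equiv> prod_mat_upt d (\<lambda>l. B 0 * A l) n"
  obtains p where "mat_poly p M ^\<^sub>m n = M" "invertible_mat (mat_poly p M)"
    "\<forall>xs\<in>idx n d. tensor_apply n d (\<lambda>_. A 0 * mat_poly p M) \<psi> xs = \<phi> xs"
proof -
  have MC: "M \<in> carrier_mat d d" unfolding M_def using A B(1) n by (intro prod_mat_upt_carrier) simp
  have "det (B l) * det (A l) = 1" if "l < n" for l using det_mult[OF B(1) A, of l l] B(2) that by simp
  then have "det (B 0 * A l) \<noteq> 0" if "l < n" for l
    using det_mult[OF B(1) A, of 0 l] n that by (metis mult_eq_0_iff zero_neq_one)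
  then have inv: "invertible_mat M"
    unfolding M_def using A B(1) n by (intro prod_mat_upt_invertible) (simp add: invertible_mat_iff_det[of _ d])
  then obtain p where root: "mat_poly p M ^\<^sub>m n = M" using invertible_mat_poly_nth_root[OF MC _ n] by blast
  then have "invertible_mat (mat_poly p M)" using inv n by (intro invertible_mat_pow_root[OF mat_poly_carrier[OF MC]]) simp_all
  then show thesis using tensor_apply_const_factor[OF \<psi> \<phi> A B AB A\<psi> M_def[THEN meta_eq_to_obj_eq] root] n root that by blast
qed

lemma equal_invertible_factors_exist:
  assumes \<psi>: "perm_invariant n d \<psi>" and \<phi>: "perm_invariant n d \<phi>"
    and A: "\<forall>k<n. A k \<in> carrier_mat d d \<and> invertible_mat (A k)"
    and A\<psi>: "\<forall>xs\<in>idx n d. tensor_apply n d A \<psi> xs = \<phi> xs" and n: "0 < n"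
  shows "\<exists>C. C \<in> carrier_mat d d \<and> invertible_mat C \<and>
    (\<forall>xs\<in>idx n d. tensor_apply n d (\<lambda>_. C) \<psi> xs = \<phi> xs)"
proof -
  have AC: "\<And>k. k < n \<Longrightarrow> A k \<in> carrier_mat d d" using A by simp
  have "\<forall>k. \<exists>B. k < n \<longrightarrow> B \<in> carrier_mat d d \<and> B * A k = 1\<^sub>m d \<and> A k * B = 1\<^sub>m d"
    using A invertible_mat_inverse by metis
  then obtain B where B: "\<And>k. k < n \<Longrightarrow> B k \<in> carrier_mat d d \<and> B k * A k = 1\<^sub>m d \<and> A k * B k = 1\<^sub>m d"
    by metis
  let ?M = "prod_mat_upt d (\<lambda>l. B 0 * A l) n"
  obtain p where "invertible_mat (mat_poly p ?M)"
    "\<forall>xs\<in>idx n d. tensor_apply n d (\<lambda>_. A 0 * mat_poly p ?M) \<psi> xs = \<phi> xs"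
    using tensor_apply_const_factor_exists[OF \<psi> \<phi> AC _ _ _ A\<psi> n, where B = B] B n by blast
  moreover have "mat_poly p ?M \<in> carrier_mat d d"
    using AC B n by (intro mat_poly_carrier prod_mat_upt_carrier) auto
  ultimately show ?thesis
    using A n by (intro exI[of _ "A 0 * mat_poly p ?M"]) (auto intro: invertible_mat_mult)
qed

lemma equal_unitary_factors_exist:
  assumes \<psi>: "perm_invariant n d \<psi>" and \<phi>: "perm_invariant n d \<phi>"
    and U: "\<forall>k<n. unitary_mat d (A k)"
    and A\<psi>: "\<forall>xs\<in>idx n d. tensor_apply n d A \<psi> xs = \<phi> xs" and n: "0 < n"
  shows "\<exists>C. unitary_mat d C \<and> invertible_mat C \<and>
    (\<forall>xs\<in>idx n d. tensor_apply n d (\<lambda>_. C) \<psi> xs = \<phi> xs)"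
proof -
  let ?M = "prod_mat_upt d (\<lambda>l. conj_transpose (A 0) * A l) n"
  have AC: "\<And>k. k < n \<Longrightarrow> A k \<in> carrier_mat d d"
    and "\<And>k. k < n \<Longrightarrow> conj_transpose (A k) \<in> carrier_mat d d"
      "\<And>k. k < n \<Longrightarrow> conj_transpose (A k) * A k = 1\<^sub>m d" "A 0 * conj_transpose (A 0) = 1\<^sub>m d"
    using U n unfolding unitary_mat_def by auto
  then obtain p where root: "mat_poly p ?M ^\<^sub>m n = ?M"
    and eq: "\<forall>xs\<in>idx n d. tensor_apply n d (\<lambda>_. A 0 * mat_poly p ?M) \<psi> xs = \<phi> xs"
    using tensor_apply_const_factor_exists[OF \<psi> \<phi> AC _ _ _ A\<psi> n, where B = "\<lambda>k. conj_transpose (A k)"]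
    by blast
  have "unitary_mat d ?M"
    using U n by (intro prod_mat_upt_unitary unitary_mat_mult unitary_mat_conj_transpose) auto
  then have "unitary_mat d (A 0 * mat_poly p ?M)"
    using U n unitary_mat_poly_root[OF _ n root] by (intro unitary_mat_mult) auto
  then show ?thesis using eq unitary_mat_invertible by blast
qed

theorem theorem1:
  fixes n d :: nat and \<psi> \<phi> :: "nat list \<Rightarrow> complex" and As :: "nat \<Rightarrow> complex mat"
  assumes "n \<ge> 2" and "d \<ge> 2"
    and "perm_symmetric n d \<psi>" and "perm_symmetric n d \<phi>"
    and "\<forall>k<n. As k \<in> carrier_mat d d \<and> invertible_mat (As k)"
    and "\<forall>xs\<in>idx n d. tensor_apply n d As \<psi> xs = \<phi> xs"
  shows "(\<exists>A. A \<in> carrier_mat d d \<and> invertible_mat A \<and>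
              (\<forall>xs\<in>idx n d. tensor_apply n d (\<lambda>_. A) \<psi> xs = \<phi> xs))
       \<and> ((\<forall>k<n. unitary_mat d (As k)) \<longrightarrow>
            (\<exists>A. unitary_mat d A \<and> invertible_mat A \<and>
              (\<forall>xs\<in>idx n d. tensor_apply n d (\<lambda>_. A) \<psi> xs = \<phi> xs)))"
proof -
  \<comment> \<open>the argument works for every dimension \<open>d\<close> and every \<open>n > 0\<close>\<close>
  have n: "0 < n" using assms(1) by simp
  have \<psi>: "perm_invariant n d \<psi>" using assms(3) by (rule perm_symmetric_imp_perm_invariant)
  have \<phi>: "perm_invariant n d \<phi>" using assms(4) by (rule perm_symmetric_imp_perm_invariant)
  show ?thesis
    using equal_invertible_factors_exist[OF \<psi> \<phi> assms(5,6) n]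
      equal_unitary_factors_exist[OF \<psi> \<phi> _ assms(6) n] by blast
qed

end
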